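(* Let $d\ge4$, let $F$ be a field with $\operatorname{char}F=0$ or $\operatorname{char}F>d$, and let $K/F$ be a degree $d$ extension whose Galois closure $L$ has $\mathrm{Gal}(L/F)\cong S_d$. Let $1,\alpha_1,\dots,\alpha_{d-1}$ be an $F$-basis of $K$ with $\mathrm{Tr}_{K/F}(\alpha_i)=0$ for $i\ge1$, and let $1,\alpha_1^*,\dots,\alpha_{d-1}^*$ be the dual basis with respect to the trace form $(x,y)\mapsto\mathrm{Tr}_{K/F}(xy)$. Let $Q^1,\dots,Q^{\beta}\in F[x_1,\dots,x_{d-1}]$ be the quadratic forms defined below. Then for every $\ell$, \[Q^\ell(\alpha_1^*,\dots,\alpha_{d-1}^* )=0\quad\text{in }K,\] and consequently $Q^\ell$ vanishes at each of the $d$ points $[\sigma_m(\alpha_1^* ):\dots:\sigma_m(\alpha_{d-1}^* )]\in\mathbf{P}^{d-2}(L)$, $m=1,\dots,d$.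
   Context: Let $\sigma_1=\mathrm{id},\sigma_2,\dots,\sigma_d$ be the $F$-embeddings $K\hookrightarrow L$, write $\alpha^{(m)}=\sigma_m(\alpha)$ for $\alpha\in K$, and identify $\mathrm{Gal}(L/F)$ with $S_d=\mathrm{Sym}\{1,\dots,d\}$ via its action on the indices of the $\alpha^{(m)}$ for a primitive element $\alpha$ of $K$. Let $V_1=\mathrm{Span}_F\{\alpha_1,\dots,\alpha_{d-1}\}$ (the trace-zero elements of $K$). View $L$ as a representation of $S_d$ over $F$; let $W_{(d-2,2)}\subseteq L$ be its isotypic component of the Specht module $V_{(d-2,2)}$, and $V_2=W_{(d-2,2)}\cap L^{S_2\times S_{d-2}}$, where $S_2\times S_{d-2}$ is the stabilizer of $\{1,2\}$; $V_2$ has $F$-dimension $\beta=d(d-3)/2$. Define the quadratic map $q\colon V_1\to L$ by \[q(\alpha)=\sum_{\tau\in S_{d-2}}\big(\alpha^{(1)}-\alpha^{(\tau(3))}\big)\big(\alpha^{(2)}-\alpha^{(\tau(4))}\big),\] with $S_{d-2}$ the permutations of $\{3,\dots,d\}$; its image lies in $V_2$. Fix an $F$-basis $\omega_1,\dots,\omega_\beta$ of $V_2$ and define the quadratic forms $Q^\ell$ by $q\big(\sum_j a_j\alpha_j\big)=\sum_{\ell=1}^{\beta}Q^\ell(a_1,\dots,a_{d-1})\,\omega_\ell$ for all $a_j\in F$. *)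

theory Defs
  imports Main "HOL-Combinatorics.Permutations"
begin

text \<open>Conventions. The Galois closure L is the whole field type 'a; the base field F and the
degree-d field K are subsets of it.  Embeddings and indices are 1-based as in the paper.\<close>

definition is_subfield :: "'a::field set \<Rightarrow> bool" where
  "is_subfield S \<longleftrightarrow> 0 \<in> S \<and> 1 \<in> S \<and> (\<forall>x\<in>S. \<forall>y\<in>S. x + y \<in> S \<and> x * y \<in> S)
     \<and> (\<forall>x\<in>S. - x \<in> S \<and> inverse x \<in> S)"

definition gen_field :: "'a::field set \<Rightarrow> 'a set" where
  "gen_field S = \<Inter> {T. is_subfield T \<and> S \<subseteq> T}"

definition is_basis :: "'a::field set \<Rightarrow> 'a set \<Rightarrow> 'i set \<Rightarrow> ('i \<Rightarrow> 'a) \<Rightarrow> bool" where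
  "is_basis F V I b \<longleftrightarrow> finite I \<and> b ` I \<subseteq> V
     \<and> (\<forall>c. (\<forall>i\<in>I. c i \<in> F) \<longrightarrow> (\<Sum>i\<in>I. c i * b i) = 0 \<longrightarrow> (\<forall>i\<in>I. c i = 0))
     \<and> (\<forall>x\<in>V. \<exists>c. (\<forall>i\<in>I. c i \<in> F) \<and> x = (\<Sum>i\<in>I. c i * b i))"

definition fspan :: "'a::field set \<Rightarrow> 'a set \<Rightarrow> 'a set" where
  "fspan F S = {x. \<exists>(n::nat) c v. (\<forall>i<n. c i \<in> F \<and> v i \<in> S) \<and> x = (\<Sum>i<n. c i * v i)}"

definition coord :: "'a::field set \<Rightarrow> 'i set \<Rightarrow> ('i \<Rightarrow> 'a) \<Rightarrow> 'a \<Rightarrow> 'i \<Rightarrow> 'a" where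
  "coord F I b y = (SOME c. (\<forall>i\<in>I. c i \<in> F) \<and> y = (\<Sum>i\<in>I. c i * b i))"

text \<open>Trace Tr_{K/F}(x): trace of the F-linear map "multiplication by x" on K, computed in
(some) F-basis of K.\<close>
definition trace :: "'a::field set \<Rightarrow> 'a set \<Rightarrow> 'a \<Rightarrow> 'a" where
  "trace F K x = (case (SOME (n, b). is_basis F K {..<n::nat} b) of
      (n, b) \<Rightarrow> (\<Sum>i<n. coord F {..<n} b (x * b i) i))"

definition is_embedding :: "'a::field set \<Rightarrow> 'a set \<Rightarrow> ('a \<Rightarrow> 'a) \<Rightarrow> bool" where
  "is_embedding F K s \<longleftrightarrow> inj_on s K \<and> (\<forall>x\<in>F. s x = x) \<and> s 1 = 1
     \<and> (\<forall>x\<in>K. \<forall>y\<in>K. s (x + y) = s x + s y \<and> s (x * y) = s x * s y)"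

definition gal_auto :: "'a::field set \<Rightarrow> ('a \<Rightarrow> 'a) \<Rightarrow> bool" where
  "gal_auto F g \<longleftrightarrow> bij g \<and> g 1 = 1 \<and> (\<forall>x y. g (x + y) = g x + g y \<and> g (x * y) = g x * g y)
     \<and> (\<forall>x\<in>F. g x = x)"

definition gal_perm :: "'a::field set \<Rightarrow> (nat \<Rightarrow> 'a \<Rightarrow> 'a) \<Rightarrow> nat \<Rightarrow> ('a \<Rightarrow> 'a) \<Rightarrow> (nat \<Rightarrow> nat) \<Rightarrow> bool" where
  "gal_perm K \<sigma> d g \<pi> \<longleftrightarrow> \<pi> permutes {1..d} \<and> (\<forall>m\<in>{1..d}. \<forall>x\<in>K. g (\<sigma> m x) = \<sigma> (\<pi> m) x)"

text \<open>Permutation module on 2-subsets of {1..d} (tabloids of shape (d-2,2)), as F-valued functions.\<close>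
definition tab_ind :: "nat set \<Rightarrow> nat set \<Rightarrow> 'a::field" where
  "tab_ind S T = (if T = S then 1 else 0)"

text \<open>Polytabloid of the tableau with first row c e ..., second row a b (columns {c,a}, {e,b}).\<close>
definition polytabloid :: "nat \<Rightarrow> nat \<Rightarrow> nat \<Rightarrow> nat \<Rightarrow> nat set \<Rightarrow> 'a::field" where
  "polytabloid a b c e = (\<lambda>T. tab_ind {a,b} T - tab_ind {c,b} T - tab_ind {a,e} T + tab_ind {c,e} T)"

definition specht :: "'a::field set \<Rightarrow> nat \<Rightarrow> (nat set \<Rightarrow> 'a) set" where
  "specht F d = {v. \<exists>(n::nat) k a b c e. (\<forall>i<n. k i \<in> F \<and> distinct [a i, b i, c i, e i]
        \<and> {a i, b i, c i, e i} \<subseteq> {1..d})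
      \<and> v = (\<lambda>T. \<Sum>i<n. k i * (polytabloid (a i) (b i) (c i) (e i) T :: 'a))}"

definition perm_act :: "(nat \<Rightarrow> nat) \<Rightarrow> (nat set \<Rightarrow> 'a) \<Rightarrow> (nat set \<Rightarrow> 'a)" where
  "perm_act \<pi> v = (\<lambda>T. v (inv \<pi> ` T))"

definition specht_hom :: "'a::field set \<Rightarrow> 'a set \<Rightarrow> (nat \<Rightarrow> 'a \<Rightarrow> 'a) \<Rightarrow> nat \<Rightarrow> ((nat set \<Rightarrow> 'a) \<Rightarrow> 'a) \<Rightarrow> bool" where
  "specht_hom F K \<sigma> d f \<longleftrightarrow>
     (\<forall>u\<in>specht F d. \<forall>v\<in>specht F d. f (\<lambda>T. u T + v T) = f u + f v)
   \<and> (\<forall>k\<in>F. \<forall>v\<in>specht F d. f (\<lambda>T. k * v T) = k * f v)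
   \<and> (\<forall>g \<pi>. gal_auto F g \<and> gal_perm K \<sigma> d g \<pi> \<longrightarrow> (\<forall>v\<in>specht F d. f (perm_act \<pi> v) = g (f v)))"

text \<open>Isotypic component W_{(d-2,2)} of L: sum of the images of all S_d-homomorphisms
V_{(d-2,2)} \<rightarrow> L (= sum of all subrepresentations isomorphic to V_{(d-2,2)}).\<close>
definition isotypic :: "'a::field set \<Rightarrow> 'a set \<Rightarrow> (nat \<Rightarrow> 'a \<Rightarrow> 'a) \<Rightarrow> nat \<Rightarrow> 'a set" where
  "isotypic F K \<sigma> d = fspan F (\<Union> {f ` specht F d | f. specht_hom F K \<sigma> d f})"

definition fixed_S2 :: "'a::field set \<Rightarrow> 'a set \<Rightarrow> (nat \<Rightarrow> 'a \<Rightarrow> 'a) \<Rightarrow> nat \<Rightarrow> 'a set" where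
  "fixed_S2 F K \<sigma> d = {y. \<forall>g \<pi>. gal_auto F g \<and> gal_perm K \<sigma> d g \<pi> \<and> \<pi> ` {1,2} = {1,2} \<longrightarrow> g y = y}"

definition V2 :: "'a::field set \<Rightarrow> 'a set \<Rightarrow> (nat \<Rightarrow> 'a \<Rightarrow> 'a) \<Rightarrow> nat \<Rightarrow> 'a set" where
  "V2 F K \<sigma> d = isotypic F K \<sigma> d \<inter> fixed_S2 F K \<sigma> d"

definition qmap :: "(nat \<Rightarrow> 'a \<Rightarrow> 'a::field) \<Rightarrow> nat \<Rightarrow> 'a \<Rightarrow> 'a" where
  "qmap \<sigma> d x = (\<Sum>\<tau>\<in>{\<tau>. \<tau> permutes {3..d}}.
      (\<sigma> 1 x - \<sigma> (\<tau> 3) x) * (\<sigma> 2 x - \<sigma> (\<tau> 4) x))"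

definition qform :: "nat \<Rightarrow> (nat \<Rightarrow> nat \<Rightarrow> 'a::field) \<Rightarrow> (nat \<Rightarrow> 'a) \<Rightarrow> 'a" where
  "qform n C x = (\<Sum>i\<in>{1..n}. \<Sum>j\<in>{1..n}. C i j * x i * x j)"

end

theory Submission
  imports Defs "Jordan_Normal_Form.Determinant"
begin

text \<open>
  Put \<open>x\<^sub>n = (\<sigma>\<^sub>n(\<alpha>\<^sub>i\<^sup>*))\<^sub>i\<close>. Trace duality together with \<open>Tr = \<Sigma>\<^sub>m \<sigma>\<^sub>m\<close> gives
  \<open>\<Sigma>\<^sub>i \<sigma>\<^sub>n(\<alpha>\<^sub>i\<^sup>*) \<sigma>\<^sub>m(\<alpha>\<^sub>i) = \<delta>\<^sub>n\<^sub>m - 1/d\<close>, so the two linear factors of the summand of \<open>q\<close> indexed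
  by \<open>\<tau>\<close> take the values \<open>\<delta>\<^sub>n\<^sub>1 - \<delta>\<^sub>n\<^sub>\<tau>\<^sub>3\<close> and \<open>\<delta>\<^sub>n\<^sub>2 - \<delta>\<^sub>n\<^sub>\<tau>\<^sub>4\<close> at \<open>x\<^sub>n\<close>, and their product
  vanishes because \<open>{1, \<tau> 3}\<close> and \<open>{2, \<tau> 4}\<close> are disjoint. Since the characteristic is not 2,
  the identity defining the \<open>Q\<^sup>l\<close> extends from \<open>F\<close> to \<open>L\<close>, whence
  \<open>\<Sigma>\<^sub>l \<sigma>\<^sub>n(Q\<^sup>l(\<alpha>\<^sup>*)) \<omega>\<^sub>l = 0\<close> for every \<open>n\<close>. Expanding \<open>Q\<^sup>l(\<alpha>\<^sup>*) \<in> K\<close> in an \<open>F\<close>-basis and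
  inverting the matrix \<open>(\<sigma>\<^sub>n(\<beta>\<^sub>k))\<close>, which is nonsingular by Dedekind's lemma, the
  \<open>F\<close>-independence of the \<open>\<omega>\<^sub>l\<close> forces \<open>Q\<^sup>l(\<alpha>\<^sup>*) = 0\<close>.
\<close>

lemma is_subfield_closed:
  assumes "is_subfield S"
  shows subfield_zero: "0 \<in> S" and subfield_one: "1 \<in> S"
    and subfield_add: "x \<in> S \<Longrightarrow> y \<in> S \<Longrightarrow> x + y \<in> S"
    and subfield_mult: "x \<in> S \<Longrightarrow> y \<in> S \<Longrightarrow> x * y \<in> S"
    and subfield_diff: "x \<in> S \<Longrightarrow> y \<in> S \<Longrightarrow> x - y \<in> S"
    and subfield_inverse: "x \<in> S \<Longrightarrow> inverse x \<in> S"
  using assms unfolding is_subfield_def diff_conv_add_uminus by blast+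

lemma subfield_sum: "is_subfield S \<Longrightarrow> (\<And>i. i \<in> I \<Longrightarrow> f i \<in> S) \<Longrightarrow> sum f I \<in> S"
  by (induction I rule: infinite_finite_induct) (auto intro: subfield_zero subfield_add)

lemma subfield_of_nat: "is_subfield S \<Longrightarrow> of_nat n \<in> S"
  by (induction n) (auto intro: subfield_zero subfield_one subfield_add)

lemma sum_kronecker_left:
  "finite A \<Longrightarrow> k \<in> A \<Longrightarrow> (\<Sum>j\<in>A. (if j = k then 1 else 0) * f j) = (f k :: 'a::semiring_1)"
  by (simp add: if_distrib[of "\<lambda>x. x * _"] cong: if_cong)

context
  fixes F K :: "'a::field set" and s :: "'a \<Rightarrow> 'a"
  assumes emb: "is_embedding F K s" and subK: "is_subfield K"
begin

lemma embedding_add: "x \<in> K \<Longrightarrow> y \<in> K \<Longrightarrow> s (x + y) = s x + s y"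
  and embedding_mult: "x \<in> K \<Longrightarrow> y \<in> K \<Longrightarrow> s (x * y) = s x * s y"
  using emb unfolding is_embedding_def by blast+

lemma embedding_zero: "s 0 = 0"
  using embedding_add[of 0 0] subfield_zero[OF subK] by (metis add_0 add_cancel_right_right)

lemma embedding_eq_zero_iff: "x \<in> K \<Longrightarrow> s x = 0 \<longleftrightarrow> x = 0"
proof -
  have "inj_on s K" using emb by (simp add: is_embedding_def)
  thus "x \<in> K \<Longrightarrow> s x = 0 \<longleftrightarrow> x = 0"
    using inj_on_eq_iff subfield_zero[OF subK] embedding_zero by metis
qed

lemma embedding_linear:
  assumes "F \<subseteq> K" "\<And>i. i \<in> I \<Longrightarrow> c i \<in> F" "\<And>i. i \<in> I \<Longrightarrow> x i \<in> K"
  shows "s (\<Sum>i\<in>I. c i * x i) = (\<Sum>i\<in>I. c i * s (x i))"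
  using assms
proof (induction I rule: infinite_finite_induct)
  case (insert i I)
  have "c i \<in> K" "s (c i) = c i"
    using emb insert.prems by (auto simp: is_embedding_def)
  hence "s (c i * x i) = c i * s (x i)"
    using embedding_mult insert.prems by simp
  moreover have "c i * x i \<in> K" "(\<Sum>i\<in>I. c i * x i) \<in> K"
    using insert.prems subK by (auto intro!: subfield_mult subfield_sum)
  ultimately show ?case using insert by (simp add: embedding_add)
qed (simp_all add: embedding_zero)

end

lemma basis_coord:
  assumes "is_basis F V I b" "y \<in> V"
  shows "\<forall>i\<in>I. coord F I b y i \<in> F" and "y = (\<Sum>i\<in>I. coord F I b y i * b i)"
proof -
  have "\<exists>c. (\<forall>i\<in>I. c i \<in> F) \<and> y = (\<Sum>i\<in>I. c i * b i)"
    using assms by (auto simp: is_basis_def)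
  from someI_ex[OF this] show "\<forall>i\<in>I. coord F I b y i \<in> F" "y = (\<Sum>i\<in>I. coord F I b y i * b i)"
    unfolding coord_def by blast+
qed

lemma coord_eqI:
  assumes basis: "is_basis F V I b" and subF: "is_subfield F" and y: "y \<in> V"
    and c: "\<forall>i\<in>I. c i \<in> F" and y_eq: "y = (\<Sum>i\<in>I. c i * b i)" and i: "i \<in> I"
  shows "coord F I b y i = c i"
proof -
  let ?e = "\<lambda>i. coord F I b y i - c i"
  have "(\<Sum>i\<in>I. ?e i * b i) = (\<Sum>i\<in>I. coord F I b y i * b i) - (\<Sum>i\<in>I. c i * b i)"
    by (simp add: left_diff_distrib sum_subtractf)
  also have "\<dots> = 0"
    using basis_coord(2)[OF basis y] y_eq by simp
  finally have "\<forall>i\<in>I. ?e i = 0"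
    using basis basis_coord(1)[OF basis y] c subF unfolding is_basis_def
    by (meson subfield_diff)
  thus ?thesis using i by simp
qed

lemma basis_change_inverse:
  assumes b: "is_basis F V I b" and c: "is_basis F V J c" and subF: "is_subfield F"
    and i: "i \<in> I" and k: "k \<in> I"
  shows "(\<Sum>j\<in>J. coord F J c (b k) j * coord F I b (c j) i) = (if i = k then 1 else 0)"
proof -
  have bV: "b k \<in> V" and cV: "\<And>j. j \<in> J \<Longrightarrow> c j \<in> V"
    using b c k by (auto simp: is_basis_def)
  let ?p = "coord F J c (b k)" and ?q = "\<lambda>j. coord F I b (c j)"
  have pF: "\<forall>j\<in>J. ?p j \<in> F" and qF: "\<And>j. j \<in> J \<Longrightarrow> \<forall>i\<in>I. ?q j i \<in> F"
    using basis_coord(1)[OF c bV] basis_coord(1)[OF b cV] by blast+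
  have "b k = (\<Sum>j\<in>J. ?p j * c j)"
    using basis_coord(2)[OF c bV] .
  also have "\<dots> = (\<Sum>j\<in>J. ?p j * (\<Sum>i\<in>I. ?q j i * b i))"
    using basis_coord(2)[OF b cV] by (intro sum.cong) auto
  also have "\<dots> = (\<Sum>i\<in>I. (\<Sum>j\<in>J. ?p j * ?q j i) * b i)"
    by (simp add: sum_distrib_left sum_distrib_right mult.assoc) (rule sum.swap)
  finally have "coord F I b (b k) i = (\<Sum>j\<in>J. ?p j * ?q j i)"
    using pF qF subF by (intro coord_eqI[OF b subF bV _ _ i]) (auto intro!: subfield_sum subfield_mult)
  moreover have "coord F I b (b k) i = (if i = k then 1 else 0)"
    using b k subfield_zero[OF subF] subfield_one[OF subF]
    by (intro coord_eqI[OF b subF bV _ _ i]) (simp_all add: is_basis_def sum_kronecker_left)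
  ultimately show ?thesis by simp
qed

lemma dedekind_embeddings_independent:
  assumes subK: "is_subfield K" and "finite M"
    and emb: "\<forall>m\<in>M. is_embedding F K (\<tau> m)"
    and distinct: "\<forall>m\<in>M. \<forall>m'\<in>M. m \<noteq> m' \<longrightarrow> (\<exists>x\<in>K. \<tau> m x \<noteq> \<tau> m' x)"
    and rel: "\<forall>y\<in>K. (\<Sum>m\<in>M. c m * \<tau> m y) = 0" and m: "m \<in> M"
  shows "c m = 0"
  using \<open>finite M\<close> emb distinct rel m
proof (induction M arbitrary: c m rule: finite_induct)
  case (insert a M)
  have rel': "(\<Sum>m\<in>M. c m * \<tau> m y) = - (c a * \<tau> a y)" if "y \<in> K" for y
  proof -
    have "c a * \<tau> a y + (\<Sum>m\<in>M. c m * \<tau> m y) = 0"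
      using insert.prems(3) insert.hyps that by simp
    thus ?thesis by (simp only: add_eq_0_iff)
  qed
  have mult: "\<tau> m (z * y) = \<tau> m z * \<tau> m y" if "m \<in> insert a M" "z \<in> K" "y \<in> K" for m z y
    using insert.prems(1) that unfolding is_embedding_def by blast
  have cM: "c m = 0" if m: "m \<in> M" for m
  proof -
    have "m \<noteq> a" using m insert.hyps by auto
    then obtain z where z: "z \<in> K" "\<tau> m z \<noteq> \<tau> a z"
      using insert.prems(2)[rule_format, of m a] m by auto
    \<comment> \<open>Subtract \<open>\<tau> a z\<close> times the relation from the relation evaluated at \<open>z y\<close>; the term at \<open>a\<close> cancels.\<close>
    have "\<forall>y\<in>K. (\<Sum>m\<in>M. (c m * (\<tau> m z - \<tau> a z)) * \<tau> m y) = 0"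
    proof
      fix y assume y: "y \<in> K"
      have zy: "z * y \<in> K" using subK z(1) y by (rule subfield_mult)
      have "(\<Sum>m\<in>M. (c m * (\<tau> m z - \<tau> a z)) * \<tau> m y)
          = (\<Sum>m\<in>M. c m * (\<tau> m z * \<tau> m y)) - \<tau> a z * (\<Sum>m\<in>M. c m * \<tau> m y)"
        by (simp add: algebra_simps sum_subtractf sum_distrib_left)
      also have "(\<Sum>m\<in>M. c m * (\<tau> m z * \<tau> m y)) = (\<Sum>m\<in>M. c m * \<tau> m (z * y))"
        using mult z y by (intro sum.cong) auto
      also have "\<dots> = - (c a * (\<tau> a z * \<tau> a y))"
        using rel'[OF zy] mult[of a z y] z y by simp
      also have "(\<Sum>m\<in>M. c m * \<tau> m y) = - (c a * \<tau> a y)"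
        using rel'[OF y] .
      finally show "(\<Sum>m\<in>M. (c m * (\<tau> m z - \<tau> a z)) * \<tau> m y) = 0"
        by (simp add: algebra_simps)
    qed
    moreover have "\<forall>m\<in>M. is_embedding F K (\<tau> m)"
      and "\<forall>m\<in>M. \<forall>m'\<in>M. m \<noteq> m' \<longrightarrow> (\<exists>x\<in>K. \<tau> m x \<noteq> \<tau> m' x)"
      using insert.prems(1,2) by simp_all
    ultimately have "c m * (\<tau> m z - \<tau> a z) = 0"
      using insert.IH[of "\<lambda>m. c m * (\<tau> m z - \<tau> a z)" m] m by simp
    thus ?thesis using z by simp
  qed
  have "c a * \<tau> a 1 = 0"
    using rel'[OF subfield_one[OF subK]] cM by simp
  moreover have "\<tau> a 1 = 1" using insert.prems(1) by (simp add: is_embedding_def)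
  ultimately show ?case using cM insert.prems(4) by auto
qed simp

lemma index_mult_mat_sum:
  "A \<in> carrier_mat nr k \<Longrightarrow> B \<in> carrier_mat k nc \<Longrightarrow> i < nr \<Longrightarrow> j < nc \<Longrightarrow>
     (A * B) $$ (i, j) = (\<Sum>l<k. A $$ (i, l) * B $$ (l, j))"
  by (simp add: scalar_prod_def atLeast0LessThan)

locale distinct_embeddings =
  fixes F K :: "'a::field set" and d :: nat and \<tau> :: "nat \<Rightarrow> 'a \<Rightarrow> 'a" and b :: "nat \<Rightarrow> 'a"
  assumes subF: "is_subfield F" and subK: "is_subfield K" and FK: "F \<subseteq> K"
    and basis: "is_basis F K {..<d} b"
    and emb: "\<And>m. m < d \<Longrightarrow> is_embedding F K (\<tau> m)"
    and emb_distinct: "\<And>m m'. m < d \<Longrightarrow> m' < d \<Longrightarrow> m \<noteq> m' \<Longrightarrow> \<exists>x\<in>K. \<tau> m x \<noteq> \<tau> m' x"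
begin

definition emb_mat :: "(nat \<Rightarrow> 'a) \<Rightarrow> nat \<Rightarrow> 'a mat" where
  "emb_mat c n = mat d n (\<lambda>(m, i). \<tau> m (c i))"

lemma basis_in_K: "i < d \<Longrightarrow> b i \<in> K"
  using basis by (auto simp: is_basis_def)

lemma embedding_expand:
  assumes "y \<in> K" "m < d"
  shows "\<tau> m y = (\<Sum>i<d. \<tau> m (b i) * coord F {..<d} b y i)"
proof -
  have "\<tau> m y = \<tau> m (\<Sum>i<d. coord F {..<d} b y i * b i)"
    using basis_coord(2)[OF basis assms(1)] by simp
  also have "\<dots> = (\<Sum>i<d. coord F {..<d} b y i * \<tau> m (b i))"
    using basis_coord(1)[OF basis assms(1)] basis_in_K
    by (intro embedding_linear[OF emb[OF assms(2)] subK FK]) auto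
  finally show ?thesis by (simp add: mult.commute)
qed

lemma det_emb_mat_nonzero: "det (emb_mat b d) \<noteq> 0"
proof
  let ?A = "emb_mat b d"
  have A: "?A \<in> carrier_mat d d" by (simp add: emb_mat_def)
  assume "det ?A = 0"
  hence "det (transpose_mat ?A) = 0" using det_transpose A by metis
  then obtain v where v: "v \<in> carrier_vec d" "v \<noteq> 0\<^sub>v d" "transpose_mat ?A *\<^sub>v v = 0\<^sub>v d"
    using det_0_iff_vec_prod_zero_field[of "transpose_mat ?A" d] A by auto
  have rel: "\<forall>y\<in>K. (\<Sum>m\<in>{..<d}. v $ m * \<tau> m y) = 0"
  proof
    fix y assume y: "y \<in> K"
    have col: "(\<Sum>m<d. v $ m * \<tau> m (b i)) = 0" if "i < d" for i
      using arg_cong[OF v(3), of "\<lambda>w. w $ i"] that v(1)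
      by (simp add: emb_mat_def scalar_prod_def atLeast0LessThan mult.commute)
    have "(\<Sum>m<d. v $ m * \<tau> m y) = (\<Sum>m<d. \<Sum>i<d. v $ m * \<tau> m (b i) * coord F {..<d} b y i)"
      using embedding_expand[OF y] by (simp add: sum_distrib_left mult.assoc)
    also have "\<dots> = (\<Sum>i<d. (\<Sum>m<d. v $ m * \<tau> m (b i)) * coord F {..<d} b y i)"
      by (subst sum.swap) (simp add: sum_distrib_right)
    finally show "(\<Sum>m\<in>{..<d}. v $ m * \<tau> m y) = 0" using col by simp
  qed
  have "v $ m = 0" if "m < d" for m
    using dedekind_embeddings_independent[OF subK _ _ _ rel] that emb emb_distinct by blast
  hence "v = 0\<^sub>v d" using v(1) by (intro eq_vecI) auto
  with v(2) show False by simp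
qed

lemma emb_mat_invertible:
  obtains R where "R \<in> carrier_mat d d" "R * emb_mat b d = 1\<^sub>m d" "emb_mat b d * R = 1\<^sub>m d"
proof -
  have "emb_mat b d \<in> carrier_mat d d" by (simp add: emb_mat_def)
  from det_non_zero_imp_unit[OF this det_emb_mat_nonzero, of undefined] that show thesis
    unfolding Units_def by (auto simp: ring_mat_simps)
qed

lemma emb_mat_basis_invertible:
  assumes c: "is_basis F K {..<n} c"
  obtains S where "S \<in> carrier_mat n d" "S * emb_mat c n = 1\<^sub>m n" "emb_mat c n * S = 1\<^sub>m d"
proof -
  let ?A = "emb_mat b d"
  obtain R where R: "R \<in> carrier_mat d d" "R * ?A = 1\<^sub>m d" "?A * R = 1\<^sub>m d"
    by (rule emb_mat_invertible)
  define P where "P = mat d n (\<lambda>(j, i). coord F {..<d} b (c i) j)"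
  define P' where "P' = mat n d (\<lambda>(i, j). coord F {..<n} c (b j) i)"
  have carriers: "?A \<in> carrier_mat d d" "P \<in> carrier_mat d n" "P' \<in> carrier_mat n d"
    by (simp_all add: emb_mat_def P_def P'_def)
  have cK: "i < n \<Longrightarrow> c i \<in> K" for i using c by (auto simp: is_basis_def)
  have AP: "emb_mat c n = ?A * P"
    by (rule eq_matI) (simp_all add: emb_mat_def P_def scalar_prod_def atLeast0LessThan
        embedding_expand[OF cK])
  have P'P: "P' * P = 1\<^sub>m n"
    by (rule eq_matI) (simp_all add: P_def P'_def scalar_prod_def atLeast0LessThan mult.commute
        basis_change_inverse[OF c basis subF])
  have "(\<Sum>j<n. coord F {..<d} b (c j) i * coord F {..<n} c (b k) j) = (if i = k then 1 else 0)"
    if "i < d" "k < d" for i k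
    using basis_change_inverse[OF basis c subF, of i k] that by (simp add: mult.commute)
  hence PP': "P * P' = 1\<^sub>m d"
    by (intro eq_matI) (simp_all add: P_def P'_def scalar_prod_def atLeast0LessThan)
  show thesis
  proof (rule that[of "P' * R"])
    show "P' * R \<in> carrier_mat n d" using carriers R by simp
    have "P' * R * emb_mat c n = P' * ((R * ?A) * P)"
      unfolding AP using carriers R(1)
      by (simp add: assoc_mult_mat[OF carriers(3) R(1) mult_carrier_mat[OF carriers(1,2)]])
    thus "P' * R * emb_mat c n = 1\<^sub>m n" using R P'P carriers by simp
    have "emb_mat c n * (P' * R) = ?A * ((P * P') * R)"
      unfolding AP using carriers R(1)
      by (simp add: assoc_mult_mat[OF carriers(1,2) mult_carrier_mat[OF carriers(3) R(1)]])
    thus "emb_mat c n * (P' * R) = 1\<^sub>m d" using R PP' carriers by simp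
  qed
qed

text \<open>\<open>trace\<close> uses an arbitrary basis \<open>c\<close>; its multiplication matrix \<open>M\<close> satisfies
  \<open>B M = diag(\<tau>\<^sub>m x) B\<close> for the (invertible) embedding matrix \<open>B\<close> of \<open>c\<close>.\<close>

lemma trace_eq_sum_embeddings:
  assumes x: "x \<in> K"
  shows "trace F K x = (\<Sum>m<d. \<tau> m x)"
proof -
  define p where "p = (SOME (n, c). is_basis F K {..<n::nat} c)"
  obtain n c where p: "p = (n, c)" by (cases p)
  have "\<exists>p. case p of (n, c) \<Rightarrow> is_basis F K {..<n::nat} c"
    using basis by auto
  from someI_ex[OF this] have c: "is_basis F K {..<n} c"
    unfolding p_def[symmetric] p by simp
  have tr: "trace F K x = (\<Sum>i<n. coord F {..<n} c (x * c i) i)"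
    unfolding trace_def p_def[symmetric] p by simp
  obtain S where S: "S \<in> carrier_mat n d" "S * emb_mat c n = 1\<^sub>m n" "emb_mat c n * S = 1\<^sub>m d"
    using emb_mat_basis_invertible[OF c] .
  define M where "M = mat n n (\<lambda>(k, i). coord F {..<n} c (x * c i) k)"
  have B: "emb_mat c n \<in> carrier_mat d n" and M: "M \<in> carrier_mat n n"
    by (simp_all add: emb_mat_def M_def)
  have cK: "i < n \<Longrightarrow> c i \<in> K" for i using c by (auto simp: is_basis_def)
  have mult: "\<tau> m x * \<tau> m (c i) = (\<Sum>k<n. \<tau> m (c k) * M $$ (k, i))" if "m < d" "i < n" for m i
  proof -
    have xc: "x * c i \<in> K" using subK x cK[OF that(2)] by (rule subfield_mult)
    have "\<tau> m x * \<tau> m (c i) = \<tau> m (\<Sum>k<n. coord F {..<n} c (x * c i) k * c k)"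
      using embedding_mult[OF emb subK x cK] basis_coord(2)[OF c xc] that by simp
    also have "\<dots> = (\<Sum>k<n. coord F {..<n} c (x * c i) k * \<tau> m (c k))"
      using basis_coord(1)[OF c xc] cK
      by (intro embedding_linear[OF emb[OF that(1)] subK FK]) auto
    finally show ?thesis using that by (simp add: M_def mult.commute)
  qed
  have M_eq: "M = S * (emb_mat c n * M)"
    using S B M by (simp add: assoc_mult_mat[symmetric, OF S(1) B M])
  have diag: "M $$ (i, i) = (\<Sum>m<d. S $$ (i, m) * (\<tau> m x * \<tau> m (c i)))" if i: "i < n" for i
  proof -
    have "M $$ (i, i) = (S * (emb_mat c n * M)) $$ (i, i)"
      using M_eq by (rule arg_cong)
    also have "\<dots> = (\<Sum>m<d. S $$ (i, m) * (emb_mat c n * M) $$ (m, i))"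
      by (rule index_mult_mat_sum[OF S(1) mult_carrier_mat[OF B M] i i])
    also have "\<dots> = (\<Sum>m<d. S $$ (i, m) * (\<Sum>k<n. \<tau> m (c k) * M $$ (k, i)))"
      by (intro sum.cong refl, subst index_mult_mat_sum[OF B M]) (simp_all add: i emb_mat_def)
    finally show ?thesis using i by (simp add: mult)
  qed
  have "trace F K x = (\<Sum>i<n. \<Sum>m<d. S $$ (i, m) * (\<tau> m x * \<tau> m (c i)))"
    unfolding tr using diag by (simp add: M_def)
  also have "\<dots> = (\<Sum>m<d. \<tau> m x * (emb_mat c n * S) $$ (m, m))"
    using index_mult_mat_sum[OF B S(1)]
    by (subst sum.swap) (simp add: emb_mat_def sum_distrib_left mult_ac)
  also have "\<dots> = (\<Sum>m<d. \<tau> m x)"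
    using S(3) by simp
  finally show ?thesis .
qed

lemma trace_dual_orthogonal:
  assumes \<gamma>K: "\<And>j. j < d \<Longrightarrow> \<gamma> j \<in> K"
    and dual: "\<And>i j. i < d \<Longrightarrow> j < d \<Longrightarrow> trace F K (b i * \<gamma> j) = (if i = j then 1 else 0)"
    and nm: "n < d" "m < d"
  shows "(\<Sum>i<d. \<tau> n (\<gamma> i) * \<tau> m (b i)) = (if n = m then 1 else 0)"
proof -
  let ?A = "emb_mat b d" and ?G = "emb_mat \<gamma> d"
  have A: "transpose_mat ?A \<in> carrier_mat d d" and G: "?G \<in> carrier_mat d d"
    by (simp_all add: emb_mat_def)
  have "(\<Sum>m<d. \<tau> m (b i) * \<tau> m (\<gamma> j)) = (if i = j then 1 else 0)" if "i < d" "j < d" for i j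
    using that dual[OF that] trace_eq_sum_embeddings[OF subfield_mult[OF subK basis_in_K \<gamma>K]]
      embedding_mult[OF emb subK basis_in_K \<gamma>K] by simp
  hence "transpose_mat ?A * ?G = 1\<^sub>m d"
    by (intro eq_matI) (simp_all add: emb_mat_def scalar_prod_def atLeast0LessThan)
  hence "?G * transpose_mat ?A = 1\<^sub>m d"
    by (rule mat_mult_left_right_inverse[OF A G])
  from arg_cong[OF this, of "\<lambda>X. X $$ (n, m)"] show ?thesis
    using nm by (simp add: emb_mat_def scalar_prod_def atLeast0LessThan)
qed

lemma embeddings_linearly_disjoint:
  assumes \<omega>: "is_basis F W \<Lambda> \<omega>" and P: "\<And>l. l \<in> \<Lambda> \<Longrightarrow> P l \<in> K"
    and rel: "\<And>n. n < d \<Longrightarrow> (\<Sum>l\<in>\<Lambda>. \<tau> n (P l) * \<omega> l) = 0" and l: "l \<in> \<Lambda>"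
  shows "P l = 0"
proof -
  let ?A = "emb_mat b d" and ?p = "\<lambda>l. coord F {..<d} b (P l)"
  define X where "X = vec d (\<lambda>k. \<Sum>l\<in>\<Lambda>. ?p l k * \<omega> l)"
  have A: "?A \<in> carrier_mat d d" and X: "X \<in> carrier_vec d"
    by (simp_all add: emb_mat_def X_def)
  have "?A *\<^sub>v X = 0\<^sub>v d"
  proof (rule eq_vecI)
    fix n assume n: "n < dim_vec (0\<^sub>v d :: 'a vec)"
    have "(?A *\<^sub>v X) $ n = (\<Sum>k<d. \<tau> n (b k) * (\<Sum>l\<in>\<Lambda>. ?p l k * \<omega> l))"
      using n by (simp add: emb_mat_def X_def scalar_prod_def atLeast0LessThan)
    also have "\<dots> = (\<Sum>l\<in>\<Lambda>. (\<Sum>k<d. \<tau> n (b k) * ?p l k) * \<omega> l)"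
      by (simp add: sum_distrib_left sum_distrib_right mult.assoc) (rule sum.swap)
    also have "\<dots> = (\<Sum>l\<in>\<Lambda>. \<tau> n (P l) * \<omega> l)"
      using n P by (simp add: embedding_expand)
    finally show "(?A *\<^sub>v X) $ n = 0\<^sub>v d $ n" using n rel by simp
  qed (simp add: emb_mat_def)
  hence "X = 0\<^sub>v d"
    using det_0_iff_vec_prod_zero_field[OF A] det_emb_mat_nonzero X by blast
  have sum0: "(\<Sum>l\<in>\<Lambda>. ?p l k * \<omega> l) = 0" if "k < d" for k
  proof -
    have "X $ k = 0" using \<open>X = 0\<^sub>v d\<close> that by simp
    thus ?thesis using that by (simp add: X_def)
  qed
  have indep: "\<forall>c. (\<forall>l\<in>\<Lambda>. c l \<in> F) \<longrightarrow> (\<Sum>l\<in>\<Lambda>. c l * \<omega> l) = 0 \<longrightarrow> (\<forall>l\<in>\<Lambda>. c l = 0)"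
    using \<omega> by (simp add: is_basis_def)
  have "?p l k = 0" if "k < d" for k
    using indep[rule_format, OF _ sum0[OF that] l] basis_coord(1)[OF basis P] that by simp
  thus "P l = 0"
    using basis_coord(2)[OF basis P[OF l]] by simp
qed

end

lemma qform_indicator:
  "qform n C (\<lambda>t. if t \<in> S then 1 else 0) = (\<Sum>i\<in>{1..n} \<inter> S. \<Sum>j\<in>{1..n} \<inter> S. C i j)"
  unfolding qform_def sum.inter_restrict[OF finite_atLeastAtMost]
  by (intro sum.cong refl) (auto intro!: sum.cong)

lemma qform_symmetrize:
  "2 * qform n C x = (\<Sum>i\<in>{1..n}. \<Sum>j\<in>{1..n}. (C i j + C j i) * x i * x j)"
proof -
  have "qform n C x = (\<Sum>j\<in>{1..n}. \<Sum>i\<in>{1..n}. C j i * x j * x i)"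
    unfolding qform_def ..
  also have "\<dots> = (\<Sum>i\<in>{1..n}. \<Sum>j\<in>{1..n}. C j i * x i * x j)"
    by (subst sum.swap) (simp only: mult_ac)
  finally have "2 * qform n C x = qform n C x + (\<Sum>i\<in>{1..n}. \<Sum>j\<in>{1..n}. C j i * x i * x j)"
    by (simp only: mult_2)
  thus ?thesis
    by (simp only: qform_def distrib_right sum.distrib)
qed

text \<open>Polarization: the values at \<open>e\<^sub>i\<close> and \<open>e\<^sub>i + e\<^sub>j\<close> determine \<open>C\<^sub>i\<^sub>j + C\<^sub>j\<^sub>i\<close>.\<close>

lemma qform_eq_if_eq_on_01:
  fixes C D :: "nat \<Rightarrow> nat \<Rightarrow> 'a::field"
  assumes two: "(2::'a) \<noteq> 0"
    and agree: "\<And>S. qform n C (\<lambda>t. if t \<in> S then 1 else 0) = qform n D (\<lambda>t. if t \<in> S then 1 else 0)"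
  shows "qform n C x = qform n D x"
proof -
  have diag: "C i i = D i i" if "i \<in> {1..n}" for i
    using agree[of "{i}"] that unfolding qform_indicator by (simp add: Int_absorb1)
  have sym: "C i j + C j i = D i j + D j i" if "i \<in> {1..n}" "j \<in> {1..n}" for i j
  proof (cases "i = j")
    case False
    hence "{1..n} \<inter> {i, j} = {i, j}" using that by auto
    thus ?thesis
      using agree[of "{i, j}"] diag that False unfolding qform_indicator by simp
  qed (use diag that in simp)
  have "2 * qform n C x = 2 * qform n D x"
    unfolding qform_symmetrize using sym by (intro sum.cong refl) auto
  thus ?thesis using two by simp
qed

lemma qform_sum_coeffs:
  "(\<Sum>l\<in>\<Lambda>. qform n (Q l) x * \<omega> l) = qform n (\<lambda>i j. \<Sum>l\<in>\<Lambda>. Q l i j * \<omega> l) x"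
proof -
  have "(\<Sum>l\<in>\<Lambda>. qform n (Q l) x * \<omega> l) = (\<Sum>l\<in>\<Lambda>. \<Sum>i\<in>{1..n}. \<Sum>j\<in>{1..n}. Q l i j * \<omega> l * x i * x j)"
    by (simp add: qform_def sum_distrib_left sum_distrib_right mult_ac)
  also have "\<dots> = (\<Sum>i\<in>{1..n}. \<Sum>l\<in>\<Lambda>. \<Sum>j\<in>{1..n}. Q l i j * \<omega> l * x i * x j)"
    by (rule sum.swap)
  also have "\<dots> = (\<Sum>i\<in>{1..n}. \<Sum>j\<in>{1..n}. \<Sum>l\<in>\<Lambda>. Q l i j * \<omega> l * x i * x j)"
    by (intro sum.cong refl) (rule sum.swap)
  finally show ?thesis
    by (simp add: qform_def sum_distrib_right)
qed

lemma qform_sum_products: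
  "qform n (\<lambda>i j. \<Sum>t\<in>T. u t i * v t j) x
     = (\<Sum>t\<in>T. (\<Sum>i\<in>{1..n}. x i * u t i) * (\<Sum>j\<in>{1..n}. x j * v t j))"
proof -
  have "qform n (\<lambda>i j. \<Sum>t\<in>T. u t i * v t j) x
      = (\<Sum>i\<in>{1..n}. \<Sum>j\<in>{1..n}. \<Sum>t\<in>T. (x i * u t i) * (x j * v t j))"
    by (simp add: qform_def sum_distrib_left sum_distrib_right mult_ac)
  also have "\<dots> = (\<Sum>i\<in>{1..n}. \<Sum>t\<in>T. \<Sum>j\<in>{1..n}. (x i * u t i) * (x j * v t j))"
    by (intro sum.cong refl) (rule sum.swap)
  also have "\<dots> = (\<Sum>t\<in>T. \<Sum>i\<in>{1..n}. \<Sum>j\<in>{1..n}. (x i * u t i) * (x j * v t j))"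
    by (rule sum.swap)
  finally show ?thesis
    by (simp add: sum_product)
qed

lemma qform_embedding:
  assumes emb: "is_embedding F K s" and subK: "is_subfield K" and FK: "F \<subseteq> K"
    and C: "\<And>i j. C i j \<in> F" and x: "\<And>i. i \<in> {1..n} \<Longrightarrow> x i \<in> K"
  shows "s (qform n C x) = qform n C (\<lambda>i. s (x i))"
proof -
  have xx: "x i * x j \<in> K" if "i \<in> {1..n}" "j \<in> {1..n}" for i j
    using subK x that by (intro subfield_mult)
  have "s (qform n C x) = s (\<Sum>p\<in>{1..n} \<times> {1..n}. C (fst p) (snd p) * (x (fst p) * x (snd p)))"
    unfolding qform_def by (simp add: sum.cartesian_product split_beta mult.assoc)
  also have "\<dots> = (\<Sum>p\<in>{1..n} \<times> {1..n}. C (fst p) (snd p) * s (x (fst p) * x (snd p)))"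
    by (rule embedding_linear[OF emb subK FK]) (use C xx in auto)
  also have "\<dots> = (\<Sum>p\<in>{1..n} \<times> {1..n}. C (fst p) (snd p) * (s (x (fst p)) * s (x (snd p))))"
    using embedding_mult[OF emb subK] x by (intro sum.cong refl) (auto simp: mem_Times_iff)
  also have "\<dots> = qform n C (\<lambda>i. s (x i))"
    unfolding qform_def by (simp add: sum.cartesian_product split_beta mult.assoc)
  finally show ?thesis .
qed

locale trace_dual_basis =
  distinct_embeddings F K d "\<lambda>m. \<sigma> (Suc m)" "\<lambda>i. if i = 0 then 1 else \<alpha> i"
  for F K :: "'a::field set" and d :: nat and \<sigma> :: "nat \<Rightarrow> 'a \<Rightarrow> 'a" and \<alpha> :: "nat \<Rightarrow> 'a" +
  fixes \<alpha>s :: "nat \<Rightarrow> 'a"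
  assumes char_d: "(of_nat d :: 'a) \<noteq> 0"
    and trace_zero: "\<And>i. i \<in> {1..<d} \<Longrightarrow> trace F K (\<alpha> i) = 0"
    and dual_in: "\<And>j. j \<in> {1..<d} \<Longrightarrow> \<alpha>s j \<in> K"
    and dual_trace_zero: "\<And>j. j \<in> {1..<d} \<Longrightarrow> trace F K (\<alpha>s j) = 0"
    and dual: "\<And>i j. i \<in> {1..<d} \<Longrightarrow> j \<in> {1..<d} \<Longrightarrow> trace F K (\<alpha> i * \<alpha>s j) = (if i = j then 1 else 0)"
begin

lemma embedding_\<sigma>: "m \<in> {1..d} \<Longrightarrow> is_embedding F K (\<sigma> m)"
  using emb[of "m - 1"] by (cases m) auto

lemma \<alpha>_in_K: "i \<in> {1..<d} \<Longrightarrow> \<alpha> i \<in> K"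
  using basis_in_K[of i] by simp

lemma trace_mult_base:
  assumes "y \<in> K" "c \<in> F"
  shows "trace F K (y * c) = trace F K y * c"
proof -
  have "\<sigma> (Suc m) (y * c) = \<sigma> (Suc m) y * c" if "m < d" for m
    using emb[OF that] assms FK by (auto simp: is_embedding_def)
  thus ?thesis
    using assms FK subK by (simp add: trace_eq_sum_embeddings subfield_mult subsetD sum_distrib_right)
qed

lemma dual_pairing:
  assumes n: "n \<in> {1..d}" and m: "m \<in> {1..d}"
  shows "(\<Sum>i\<in>{1..<d}. \<sigma> n (\<alpha>s i) * \<sigma> m (\<alpha> i)) = (if n = m then 1 else 0) - 1 / of_nat d"
proof -
  define \<gamma> where "\<gamma> j = (if j = 0 then 1 / of_nat d else \<alpha>s j)" for j
  have inv_d: "1 / of_nat d \<in> F"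
    using subfield_inverse[OF subF subfield_of_nat[OF subF]] by (simp add: divide_inverse)
  have \<gamma>K: "\<gamma> j \<in> K" if "j < d" for j
    using dual_in inv_d FK that by (auto simp: \<gamma>_def)
  have "trace F K 1 = of_nat d"
    using emb subfield_one[OF subK] by (simp add: trace_eq_sum_embeddings is_embedding_def)
  moreover have "trace F K (\<alpha> i / of_nat d) = 0" if "i \<in> {1..<d}" for i
    using trace_mult_base[OF \<alpha>_in_K[OF that] inv_d] trace_zero[OF that] by simp
  ultimately have "trace F K ((if i = 0 then 1 else \<alpha> i) * \<gamma> j) = (if i = j then 1 else 0)"
    if "i < d" "j < d" for i j
    using that char_d dual dual_trace_zero trace_mult_base[OF subfield_one[OF subK] inv_d]
    by (auto simp: \<gamma>_def)
  from trace_dual_orthogonal[OF \<gamma>K this, of "n - 1" "m - 1"]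
  have "(\<Sum>i<d. \<sigma> n (\<gamma> i) * \<sigma> m (if i = 0 then 1 else \<alpha> i)) = (if n = m then 1 else 0)"
    using n m by auto
  moreover have "{..<d} = insert 0 {1..<d}" using n by auto
  moreover have "\<sigma> n (1 / of_nat d) = 1 / of_nat d" "\<sigma> m 1 = 1"
    using embedding_\<sigma>[OF n] embedding_\<sigma>[OF m] inv_d by (auto simp: is_embedding_def)
  ultimately have "1 / of_nat d + (\<Sum>i\<in>{1..<d}. \<sigma> n (\<alpha>s i) * \<sigma> m (\<alpha> i)) = (if n = m then 1 else 0)"
    by (simp add: \<gamma>_def)
  thus ?thesis by (subst eq_diff_eq) (simp only: add.commute)
qed

lemma dual_pairing_diff:
  assumes "n \<in> {1..d}" "p \<in> {1..d}" "q \<in> {1..d}"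
  shows "(\<Sum>i\<in>{1..<d}. \<sigma> n (\<alpha>s i) * (\<sigma> p (\<alpha> i) - \<sigma> q (\<alpha> i)))
           = (if n = p then 1 else 0) - (if n = q then 1 else 0)"
  using dual_pairing[OF assms(1,2)] dual_pairing[OF assms(1,3)]
  by (simp add: right_diff_distrib sum_subtractf)

definition qmap_coeff :: "nat \<Rightarrow> nat \<Rightarrow> 'a" where
  "qmap_coeff i j = (\<Sum>\<pi>\<in>{\<pi>. \<pi> permutes {3..d}}.
      (\<sigma> 1 (\<alpha> i) - \<sigma> (\<pi> 3) (\<alpha> i)) * (\<sigma> 2 (\<alpha> j) - \<sigma> (\<pi> 4) (\<alpha> j)))"

lemma qform_qmap_coeff:
  "qform (d - 1) qmap_coeff x = (\<Sum>\<pi>\<in>{\<pi>. \<pi> permutes {3..d}}.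
      (\<Sum>i\<in>{1..<d}. x i * (\<sigma> 1 (\<alpha> i) - \<sigma> (\<pi> 3) (\<alpha> i)))
    * (\<Sum>j\<in>{1..<d}. x j * (\<sigma> 2 (\<alpha> j) - \<sigma> (\<pi> 4) (\<alpha> j))))"
proof -
  have "{1..d - 1} = {1..<d}" by auto
  thus ?thesis
    unfolding qmap_coeff_def[abs_def] qform_sum_products by simp
qed

lemma permutes_3_4:
  assumes "4 \<le> d" "\<pi> permutes {3..d}"
  shows "\<pi> 3 \<in> {3..d}" "\<pi> 4 \<in> {3..d}" "\<pi> 3 \<noteq> \<pi> 4"
proof -
  show "\<pi> 3 \<in> {3..d}" "\<pi> 4 \<in> {3..d}"
    using permutes_in_image[OF assms(2)] assms(1) by auto
  show "\<pi> 3 \<noteq> \<pi> 4"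
    using permutes_inj[OF assms(2)] by (metis injD numeral_eq_iff semiring_norm(89) num.inject(2))
qed

lemma qmap_eq_qform:
  assumes d4: "4 \<le> d" and a: "\<And>j. a j \<in> F"
  shows "qmap \<sigma> d (\<Sum>j\<in>{1..<d}. a j * \<alpha> j) = qform (d - 1) qmap_coeff a"
proof -
  have lin: "\<sigma> p (\<Sum>j\<in>{1..<d}. a j * \<alpha> j) = (\<Sum>j\<in>{1..<d}. a j * \<sigma> p (\<alpha> j))" if "p \<in> {1..d}" for p
    by (rule embedding_linear[OF embedding_\<sigma>[OF that] subK FK]) (use a \<alpha>_in_K in auto)
  have diff: "\<sigma> p (\<Sum>j\<in>{1..<d}. a j * \<alpha> j) - \<sigma> q (\<Sum>j\<in>{1..<d}. a j * \<alpha> j)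
      = (\<Sum>j\<in>{1..<d}. a j * (\<sigma> p (\<alpha> j) - \<sigma> q (\<alpha> j)))" if "p \<in> {1..d}" "q \<in> {1..d}" for p q
    using lin[OF that(1)] lin[OF that(2)] by (simp add: right_diff_distrib sum_subtractf)
  show ?thesis
    unfolding qmap_def qform_qmap_coeff
  proof (intro sum.cong refl)
    fix \<pi> assume "\<pi> \<in> {\<pi>. \<pi> permutes {3..d}}"
    hence "\<pi> 3 \<in> {1..d}" "\<pi> 4 \<in> {1..d}" "1 \<in> {1..d}" "2 \<in> {1..d}"
      using permutes_3_4[OF d4, of \<pi>] d4 by auto
    thus "(\<sigma> 1 (\<Sum>j\<in>{1..<d}. a j * \<alpha> j) - \<sigma> (\<pi> 3) (\<Sum>j\<in>{1..<d}. a j * \<alpha> j))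
        * (\<sigma> 2 (\<Sum>j\<in>{1..<d}. a j * \<alpha> j) - \<sigma> (\<pi> 4) (\<Sum>j\<in>{1..<d}. a j * \<alpha> j))
      = (\<Sum>i\<in>{1..<d}. a i * (\<sigma> 1 (\<alpha> i) - \<sigma> (\<pi> 3) (\<alpha> i)))
        * (\<Sum>j\<in>{1..<d}. a j * (\<sigma> 2 (\<alpha> j) - \<sigma> (\<pi> 4) (\<alpha> j)))"
      by (simp only: diff)
  qed
qed

lemma qform_qmap_coeff_dual_basis:
  assumes d4: "4 \<le> d" and n: "n \<in> {1..d}"
  shows "qform (d - 1) qmap_coeff (\<lambda>i. \<sigma> n (\<alpha>s i)) = 0"
  unfolding qform_qmap_coeff
proof (intro sum.neutral ballI)
  fix \<pi> assume "\<pi> \<in> {\<pi>. \<pi> permutes {3..d}}"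
  hence \<pi>: "\<pi> 3 \<in> {3..d}" "\<pi> 4 \<in> {3..d}" "\<pi> 3 \<noteq> \<pi> 4"
    using permutes_3_4[OF d4, of \<pi>] by auto
  \<comment> \<open>The two factors are \<open>\<delta>\<^sub>n\<^sub>1 - \<delta>\<^sub>n\<^sub>\<pi>\<^sub>3\<close> and \<open>\<delta>\<^sub>n\<^sub>2 - \<delta>\<^sub>n\<^sub>\<pi>\<^sub>4\<close>, and \<open>{1, \<pi> 3}\<close> is disjoint from \<open>{2, \<pi> 4}\<close>.\<close>
  show "(\<Sum>i\<in>{1..<d}. \<sigma> n (\<alpha>s i) * (\<sigma> 1 (\<alpha> i) - \<sigma> (\<pi> 3) (\<alpha> i)))
      * (\<Sum>j\<in>{1..<d}. \<sigma> n (\<alpha>s j) * (\<sigma> 2 (\<alpha> j) - \<sigma> (\<pi> 4) (\<alpha> j))) = 0"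
    using dual_pairing_diff[OF n, of 1 "\<pi> 3"] dual_pairing_diff[OF n, of 2 "\<pi> 4"] \<pi> d4 by auto
qed

lemma dual_basis_embedding_nonzero:
  assumes "2 \<le> d" and m: "m \<in> {1..d}"
  shows "\<exists>i\<in>{1..<d}. \<sigma> m (\<alpha>s i) \<noteq> 0"
proof (rule ccontr)
  assume "\<not> ?thesis"
  hence "\<alpha>s 1 = 0"
    using embedding_eq_zero_iff[OF embedding_\<sigma>[OF m] subK dual_in] assms(1) by auto
  moreover have "trace F K 0 = 0"
    using embedding_zero[OF emb subK] subfield_zero[OF subK] by (simp add: trace_eq_sum_embeddings)
  ultimately show False
    using dual[of 1 1] assms(1) by simp
qed

text \<open>\<open>Qdef\<close> only concerns coefficient vectors over \<open>F\<close>; \<open>extend\<close> is its base change to \<open>L\<close>,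
  valid because both sides are quadratic forms and the characteristic is not 2.\<close>

lemma qforms_vanish_at_dual_basis:
  assumes d4: "4 \<le> d" and two: "(2::'a) \<noteq> 0"
    and \<omega>: "is_basis F W \<Lambda> \<omega>" and QF: "\<And>l i j. Q l i j \<in> F"
    and Qdef: "\<And>a. (\<And>j. a j \<in> F) \<Longrightarrow>
      qmap \<sigma> d (\<Sum>j\<in>{1..<d}. a j * \<alpha> j) = (\<Sum>l\<in>\<Lambda>. qform (d - 1) (Q l) a * \<omega> l)"
    and l: "l \<in> \<Lambda>"
  shows "qform (d - 1) (Q l) \<alpha>s = 0"
proof -
  have extend: "(\<Sum>l\<in>\<Lambda>. qform (d - 1) (Q l) x * \<omega> l) = qform (d - 1) qmap_coeff x" for x
    unfolding qform_sum_coeffs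
  proof (rule qform_eq_if_eq_on_01[OF two])
    fix S
    let ?a = "\<lambda>t::nat. if t \<in> S then 1 else (0::'a)"
    have "?a j \<in> F" for j using subfield_zero[OF subF] subfield_one[OF subF] by simp
    thus "qform (d - 1) (\<lambda>i j. \<Sum>l\<in>\<Lambda>. Q l i j * \<omega> l) ?a = qform (d - 1) qmap_coeff ?a"
      using Qdef qmap_eq_qform[OF d4] by (simp add: qform_sum_coeffs)
  qed
  have dual_K: "i \<in> {1..d - 1} \<Longrightarrow> \<alpha>s i \<in> K" for i
    using dual_in by auto
  have rel: "(\<Sum>l\<in>\<Lambda>. \<sigma> (Suc n) (qform (d - 1) (Q l) \<alpha>s) * \<omega> l) = 0" if "n < d" for n
  proof -
    have "(\<Sum>l\<in>\<Lambda>. \<sigma> (Suc n) (qform (d - 1) (Q l) \<alpha>s) * \<omega> l)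
        = (\<Sum>l\<in>\<Lambda>. qform (d - 1) (Q l) (\<lambda>i. \<sigma> (Suc n) (\<alpha>s i)) * \<omega> l)"
      using qform_embedding[OF emb[OF that] subK FK QF dual_K] by simp
    also have "\<dots> = 0"
      using extend qform_qmap_coeff_dual_basis[OF d4, of "Suc n"] that by simp
    finally show ?thesis .
  qed
  have in_K: "qform (d - 1) (Q l') \<alpha>s \<in> K" if "l' \<in> \<Lambda>" for l'
    unfolding qform_def using QF FK dual_K subK
    by (auto intro!: subfield_sum subfield_mult)
  show ?thesis
    using embeddings_linearly_disjoint[OF \<omega> in_K rel l] .
qed

end

theorem mainTheorem17:
  fixes F K :: "'a::field set"
    and d :: nat
    and \<sigma> :: "nat \<Rightarrow> 'a \<Rightarrow> 'a"
    and \<alpha> \<alpha>s :: "nat \<Rightarrow> 'a"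
    and \<omega> :: "nat \<Rightarrow> 'a"
    and Q :: "nat \<Rightarrow> nat \<Rightarrow> nat \<Rightarrow> 'a"
  assumes d4: "d \<ge> 4"
    and char: "\<forall>n::nat. 0 < n \<and> n \<le> d \<longrightarrow> (of_nat n :: 'a) \<noteq> 0"
    and subF: "is_subfield F" and subK: "is_subfield K" and FK: "F \<subseteq> K"
    and basis: "is_basis F K {0..<d} (\<lambda>i. if i = 0 then 1 else \<alpha> i)"
    and tr0: "\<forall>i\<in>{1..<d}. trace F K (\<alpha> i) = 0"
    and dual_in: "\<forall>j\<in>{1..<d}. \<alpha>s j \<in> K"
    and dual1: "\<forall>j\<in>{1..<d}. trace F K (\<alpha>s j) = 0"
    and dual: "\<forall>i\<in>{1..<d}. \<forall>j\<in>{1..<d}. trace F K (\<alpha> i * \<alpha>s j) = (if i = j then 1 else 0)"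
    and emb: "\<forall>m\<in>{1..d}. is_embedding F K (\<sigma> m)"
    and emb1: "\<forall>x\<in>K. \<sigma> 1 x = x"
    and emb_dist: "\<forall>m\<in>{1..d}. \<forall>m'\<in>{1..d}. m \<noteq> m' \<longrightarrow> (\<exists>x\<in>K. \<sigma> m x \<noteq> \<sigma> m' x)"
    and emb_all: "\<forall>s. is_embedding F K s \<longrightarrow> (\<exists>m\<in>{1..d}. \<forall>x\<in>K. s x = \<sigma> m x)"
    and closure: "gen_field (F \<union> (\<Union>m\<in>{1..d}. \<sigma> m ` K)) = UNIV"
    and gal_Sd: "\<forall>\<pi>. \<pi> permutes {1..d} \<longrightarrow> (\<exists>g. gal_auto F g \<and> gal_perm K \<sigma> d g \<pi>)"
    and omega: "is_basis F (V2 F K \<sigma> d) {1..d * (d - 3) div 2} \<omega>"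
    and QF: "\<forall>l i j. Q l i j \<in> F"
    and Qdef: "\<forall>a. (\<forall>j. a j \<in> F) \<longrightarrow>
        qmap \<sigma> d (\<Sum>j\<in>{1..<d}. a j * \<alpha> j)
          = (\<Sum>l\<in>{1..d * (d - 3) div 2}. qform (d - 1) (Q l) a * \<omega> l)"
  shows "\<forall>l\<in>{1..d * (d - 3) div 2}.
           qform (d - 1) (Q l) \<alpha>s = 0
         \<and> (\<forall>m\<in>{1..d}. (\<exists>i\<in>{1..<d}. \<sigma> m (\<alpha>s i) \<noteq> 0)
                       \<and> qform (d - 1) (Q l) (\<lambda>i. \<sigma> m (\<alpha>s i)) = 0)"
proof -
  have two: "(2::'a) \<noteq> 0"
    using char[rule_format, of 2] d4 by simp
  interpret trace_dual_basis F K d \<sigma> \<alpha> \<alpha>s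
  proof
    show "is_basis F K {..<d} (\<lambda>i. if i = 0 then 1 else \<alpha> i)"
      using basis by (simp add: atLeast0LessThan)
    show "\<exists>x\<in>K. \<sigma> (Suc m) x \<noteq> \<sigma> (Suc m') x" if "m < d" "m' < d" "m \<noteq> m'" for m m'
      using emb_dist that by simp
    show "(of_nat d :: 'a) \<noteq> 0"
      using char d4 by simp
  qed (use subF subK FK emb tr0 dual_in dual1 dual in auto)
  have vanish: "qform (d - 1) (Q l) \<alpha>s = 0" if "l \<in> {1..d * (d - 3) div 2}" for l
    using qforms_vanish_at_dual_basis[OF d4 two omega QF[rule_format] Qdef[rule_format] that] .
  have vanish_conjugate: "qform (d - 1) (Q l) (\<lambda>i. \<sigma> m (\<alpha>s i)) = 0"
    if l: "l \<in> {1..d * (d - 3) div 2}" and m: "m \<in> {1..d}" for l m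
  proof -
    have "i \<in> {1..d - 1} \<Longrightarrow> \<alpha>s i \<in> K" for i using dual_in by auto
    from qform_embedding[where C = "Q l" and n = "d - 1" and x = \<alpha>s,
        OF embedding_\<sigma>[OF m] subK FK QF[rule_format] this]
    show ?thesis
      unfolding vanish[OF l] embedding_zero[OF embedding_\<sigma>[OF m] subK] by (rule sym)
  qed
  have nonzero: "\<exists>i\<in>{1..<d}. \<sigma> m (\<alpha>s i) \<noteq> 0" if "m \<in> {1..d}" for m
    using dual_basis_embedding_nonzero[OF _ that] d4 by simp
  show ?thesis
    using vanish vanish_conjugate nonzero by blast
qed

end
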